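(* For every intuitionistic formula $A$: every proof of $\ \Rightarrow w:A$ in $\mathsf{L(IL)}$ can be step-wise translated into a proof of the nested sequent $\ \Rightarrow A$ in $\mathsf{N(IL)}$. In particular, if $\Rightarrow w:A$ is provable in $\mathsf{L(IL)}$ then $\Rightarrow A$ is provable in $\mathsf{N(IL)}$.
   Context: Intuitionistic formulas: $A::=p\mid\bot\mid A\lor A\mid A\land A\mid A\supset A$. $\mathsf{L(IL)}$ works on labeled sequents $\mathcal{R},\Gamma\Rightarrow\Delta$ ($\mathcal{R}$ multiset of atoms $w\le u$; $\Gamma,\Delta$ multisets of labeled formulas $w:A$) with rules: $(id)$ $\mathcal{R},w\le u,\Gamma,w:p\Rightarrow u:p,\Delta$; $(\bot_l)$ $\mathcal{R},w\le u,\Gamma,w:\bot\Rightarrow\Delta$; $(\supset_r)$ from $\mathcal{R},w\le u,\Gamma,u:A\Rightarrow u:B,\Delta$ infer $\mathcal{R},\Gamma\Rightarrow w:A\supset B,\Delta$, $u$ fresh; $(\lor_l)$ from $\mathcal{R},\Gamma,w:A\Rightarrow\Delta$ and $\mathcal{R},\Gamma,w:B\Rightarrow\Delta$ infer $\mathcal{R},\Gamma,w:A\lor B\Rightarrow\Delta$; $(\lor_r)$ from $\mathcal{R},\Gamma\Rightarrow w:A,w:B,\Delta$ infer $\mathcal{R},\Gamma\Rightarrow w:A\lor B,\Delta$; $(\land_l)$ from $\mathcal{R},\Gamma,w:A,w:B\Rightarrow\Delta$ infer $\mathcal{R},\Gamma,w:A\land B\Rightarrow\Delta$; $(\land_r)$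 from $\mathcal{R},\Gamma\Rightarrow w:A,\Delta$ and $\mathcal{R},\Gamma\Rightarrow w:B,\Delta$ infer $\mathcal{R},\Gamma\Rightarrow w:A\land B,\Delta$; $(\supset_l)$ from $\mathcal{R},w\le u,\Gamma,w:A\supset B,u:B\Rightarrow\Delta$ and $\mathcal{R},w\le u,\Gamma,w:A\supset B\Rightarrow u:A,\Delta$ infer $\mathcal{R},w\le u,\Gamma,w:A\supset B\Rightarrow\Delta$; $(ref)$ from $\mathcal{R},w\le w,\Gamma\Rightarrow\Delta$ infer $\mathcal{R},\Gamma\Rightarrow\Delta$; $(tra)$ from $\mathcal{R},w\le u,u\le v,w\le v,\Gamma\Rightarrow\Delta$ infer $\mathcal{R},w\le u,u\le v,\Gamma\Rightarrow\Delta$. Nested sequents of $\mathsf{N(IL)}$ have the form $\Gamma\Rightarrow\Delta,[\Sigma_1]_{w_1},\dots,[\Sigma_n]_{w_n}$ with $\Gamma,\Delta$ multisets of formulas and $\Sigma_i$ nested sequents; they encode trees whose nodes are sequents $\Gamma\Rightarrow\Delta$, each node carrying a distinct name (the root named $r$). $\Sigma\{\Gamma\Rightarrow\Delta\}_w$ denotes a nested sequent with node $w$ containing $\Gamma\Rightarrow\Delta$, and $\Sigma\{\cdot\}_w\{\cdot\}_u$ displays two nodes; "$u$ is reachable from $w$" means there is a (possibly length-0) downward path from $w$ to $u$ in the tree. Rules of $\mathsf{N(IL)}$: $(id)$ $\Sigma\{\Gamma_1,p\Rightarrow\Delta_1\}_w\{\Gamma_2\Rightarrow p,\Delta_2\}_u$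 ($u$ reachable from $w$; if $u=w$ this means $p$ occurs on both sides of one node); $(\bot_l)$ $\Sigma\{\Gamma,\bot\Rightarrow\Delta\}_w$; $(\lor_l),(\lor_r),(\land_l),(\land_r)$ as the sequent rules applied inside a node $\Sigma\{\cdot\}_w$; $(\supset_l)$ from $\Sigma\{\Gamma_1,A\supset B\Rightarrow\Delta_1\}_w\{\Gamma_2,B\Rightarrow\Delta_2\}_u$ and $\Sigma\{\Gamma_1,A\supset B\Rightarrow\Delta_1\}_w\{\Gamma_2\Rightarrow A,\Delta_2\}_u$ infer $\Sigma\{\Gamma_1,A\supset B\Rightarrow\Delta_1\}_w\{\Gamma_2\Rightarrow\Delta_2\}_u$ ($u$ reachable from $w$); $(\supset_r)$ from $\Sigma\{\Gamma\Rightarrow\Delta,[A\Rightarrow B]_u\}_w$ infer $\Sigma\{\Gamma\Rightarrow\Delta,A\supset B\}_w$ ($u$ a fresh name). *)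

theory Defs
  imports Main "HOL-Library.Multiset"
begin

datatype 'a fm = At 'a | Bot | Or "'a fm" "'a fm" | And "'a fm" "'a fm" | Imp "'a fm" "'a fm"

type_synonym lbl = nat

definition labels :: "(lbl \<times> lbl) multiset \<Rightarrow> (lbl \<times> 'a fm) multiset \<Rightarrow> (lbl \<times> 'a fm) multiset \<Rightarrow> lbl set" where
  "labels R G D = fst ` set_mset R \<union> snd ` set_mset R \<union> fst ` set_mset G \<union> fst ` set_mset D"

text \<open>lprov R G D : the labelled sequent R, G => D is derivable in L(IL).
  A relational atom w \<le> u is the pair (w,u); a labelled formula w:A is (w,A).\<close>

inductive lprov :: "(lbl \<times> lbl) multiset \<Rightarrow> (lbl \<times> 'a fm) multiset \<Rightarrow> (lbl \<times> 'a fm) multiset \<Rightarrow> bool" where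
  l_id: "lprov (R + {#(w,u)#}) (G + {#(w, At p)#}) (D + {#(u, At p)#})"
| l_bot: "lprov (R + {#(w,u)#}) (G + {#(w, Bot)#}) D"
| l_imp_r: "\<lbrakk> u \<notin> labels R G (D + {#(w, Imp A B)#});
             lprov (R + {#(w,u)#}) (G + {#(u, A)#}) (D + {#(u, B)#}) \<rbrakk>
            \<Longrightarrow> lprov R G (D + {#(w, Imp A B)#})"
| l_or_l: "\<lbrakk> lprov R (G + {#(w, A)#}) D; lprov R (G + {#(w, B)#}) D \<rbrakk>
            \<Longrightarrow> lprov R (G + {#(w, Or A B)#}) D"
| l_or_r: "lprov R G (D + {#(w, A), (w, B)#}) \<Longrightarrow> lprov R G (D + {#(w, Or A B)#})"
| l_and_l: "lprov R (G + {#(w, A), (w, B)#}) D \<Longrightarrow> lprov R (G + {#(w, And A B)#}) D"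
| l_and_r: "\<lbrakk> lprov R G (D + {#(w, A)#}); lprov R G (D + {#(w, B)#}) \<rbrakk>
            \<Longrightarrow> lprov R G (D + {#(w, And A B)#})"
| l_imp_l: "\<lbrakk> lprov (R + {#(w,u)#}) (G + {#(w, Imp A B), (u, B)#}) D;
             lprov (R + {#(w,u)#}) (G + {#(w, Imp A B)#}) (D + {#(u, A)#}) \<rbrakk>
            \<Longrightarrow> lprov (R + {#(w,u)#}) (G + {#(w, Imp A B)#}) D"
| l_ref: "lprov (R + {#(w,w)#}) G D \<Longrightarrow> lprov R G D"
| l_tra: "lprov (R + {#(w,u), (u,v), (w,v)#}) G D \<Longrightarrow> lprov (R + {#(w,u), (u,v)#}) G D"

text \<open>A nested sequent G => D, [S1], ..., [Sn] is a tree node with antecedent G,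
  succedent D and children S1..Sn. Nodes are addressed by paths (lists of child
  indices) from the root; these play the role of the node names. Node v is
  reachable from node w iff the path of v extends the path of w.\<close>

datatype 'a nseq = NNode "'a fm multiset" "'a fm multiset" "'a nseq list"

function node_at :: "'a nseq \<Rightarrow> nat list \<Rightarrow> 'a nseq option" where
  "node_at t [] = Some t"
| "node_at (NNode G D cs) (i # p) = (if i < length cs then node_at (cs ! i) p else None)"
  by pat_completeness auto
termination by (relation "measure (\<lambda>(t, p). length p)") auto

function upd_at :: "'a nseq \<Rightarrow> nat list \<Rightarrow> 'a nseq \<Rightarrow> 'a nseq" where
  "upd_at t [] s = s"
| "upd_at (NNode G D cs) (i # p) s =
     (if i < length cs then NNode G D (cs[i := upd_at (cs ! i) p s]) else NNode G D cs)"
  by pat_completeness auto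
termination by (relation "measure (\<lambda>(t, p, s). length p)") auto

inductive nprov :: "'a nseq \<Rightarrow> bool" where
  n_id: "\<lbrakk> node_at t p = Some (NNode G1 D1 c1); node_at t (p @ q) = Some (NNode G2 D2 c2);
          At x \<in># G1; At x \<in># D2 \<rbrakk> \<Longrightarrow> nprov t"
| n_bot: "\<lbrakk> node_at t p = Some (NNode G D c); Bot \<in># G \<rbrakk> \<Longrightarrow> nprov t"
| n_or_l: "\<lbrakk> node_at t p = Some (NNode (G + {#Or A B#}) D c);
            nprov (upd_at t p (NNode (G + {#A#}) D c));
            nprov (upd_at t p (NNode (G + {#B#}) D c)) \<rbrakk> \<Longrightarrow> nprov t"
| n_or_r: "\<lbrakk> node_at t p = Some (NNode G (D + {#Or A B#}) c);
            nprov (upd_at t p (NNode G (D + {#A, B#}) c)) \<rbrakk> \<Longrightarrow> nprov t"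
| n_and_l: "\<lbrakk> node_at t p = Some (NNode (G + {#And A B#}) D c);
            nprov (upd_at t p (NNode (G + {#A, B#}) D c)) \<rbrakk> \<Longrightarrow> nprov t"
| n_and_r: "\<lbrakk> node_at t p = Some (NNode G (D + {#And A B#}) c);
            nprov (upd_at t p (NNode G (D + {#A#}) c));
            nprov (upd_at t p (NNode G (D + {#B#}) c)) \<rbrakk> \<Longrightarrow> nprov t"
| n_imp_l: "\<lbrakk> node_at t p = Some (NNode G1 D1 c1); Imp A B \<in># G1;
             node_at t (p @ q) = Some (NNode G2 D2 c2);
             nprov (upd_at t (p @ q) (NNode (G2 + {#B#}) D2 c2));
             nprov (upd_at t (p @ q) (NNode G2 (D2 + {#A#}) c2)) \<rbrakk> \<Longrightarrow> nprov t"
| n_imp_r: "\<lbrakk> node_at t p = Some (NNode G (D + {#Imp A B#}) c);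
             nprov (upd_at t p (NNode G D (c @ [NNode {#A#} {#B#} []]))) \<rbrakk>
            \<Longrightarrow> nprov t"

end

theory Submission
  imports Defs "HOL-Library.Sublist"
begin

(* Labels of an L(IL) derivation are placed at the nodes of a nested sequent by a map f from
   labels to node addresses: every atom w <= u sends u to a descendant of f w, and every labelled
   formula x:A occurs in the node at f x (nodes may hold more formulas). Under such a placement a
   logical rule of L(IL) acting at label w is the N(IL) rule acting at node f w, with reachability
   of f u from f w read off from w <= u; the fresh label of the labelled (imp_r) is placed at the
   child node created by the nested (imp_r); (ref) and (tra) are absorbed since the descendant
   order is reflexive and transitive. Induction on the L(IL) derivation, starting from the
   placement of every label at the root of => A, gives the theorem. *)

definition sequent_at :: "'a nseq \<Rightarrow> nat list \<Rightarrow> ('a fm multiset \<times> 'a fm multiset) option" where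
  "sequent_at t p = map_option (case_nseq (\<lambda>\<Gamma> \<Delta> _. (\<Gamma>, \<Delta>))) (node_at t p)"

lemma sequent_at_eq_Some_iff:
  "sequent_at t p = Some (\<Gamma>, \<Delta>) \<longleftrightarrow> (\<exists>c. node_at t p = Some (NNode \<Gamma> \<Delta> c))"
proof (cases "node_at t p")
  case (Some s)
  then show ?thesis by (cases s) (auto simp: sequent_at_def)
qed (simp add: sequent_at_def)

lemma node_at_leaf: "node_at (NNode \<Gamma> \<Delta> []) p = (if p = [] then Some (NNode \<Gamma> \<Delta> []) else None)"
  by (cases p) simp_all

lemma node_at_append: "node_at t p = Some s \<Longrightarrow> node_at t (p @ r) = node_at s r"
  by (induction t p rule: node_at.induct) (auto split: if_splits)

lemma node_at_upd_at_append:
  "node_at t p \<noteq> None \<Longrightarrow> node_at (upd_at t p s) (p @ r) = node_at s r"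
  by (induction t p s rule: upd_at.induct) (auto split: if_splits)

lemma node_at_upd_at: "node_at t p \<noteq> None \<Longrightarrow> node_at (upd_at t p s) p = Some s"
  using node_at_upd_at_append[of t p s "[]"] by simp

lemma sequent_at_upd_at_outside:
  "\<not> prefix p q \<Longrightarrow> sequent_at (upd_at t p s) q = sequent_at t q"
proof (induction t p s arbitrary: q rule: upd_at.induct)
  case (2 \<Gamma> \<Delta> cs i p s)
  then show ?case
    by (cases q) (auto simp: sequent_at_def nth_list_update)
qed simp

lemma sequent_at_upd_at:
  assumes "node_at t p = Some (NNode \<Gamma> \<Delta> c)"
  shows "sequent_at (upd_at t p (NNode \<Gamma>' \<Delta>' c)) = (sequent_at t)(p := Some (\<Gamma>', \<Delta>'))"
proof
  fix q
  show "sequent_at (upd_at t p (NNode \<Gamma>' \<Delta>' c)) q = ((sequent_at t)(p := Some (\<Gamma>', \<Delta>'))) q"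
  proof (cases "prefix p q")
    case True
    then obtain r where q: "q = p @ r" by (auto elim: prefixE)
    then show ?thesis using assms
      by (cases r) (auto simp: sequent_at_def node_at_append node_at_upd_at_append node_at_upd_at)
  next
    case False
    then show ?thesis by (auto simp: sequent_at_upd_at_outside)
  qed
qed

lemma sequent_at_upd_at_new_child:
  assumes "node_at t p = Some (NNode \<Gamma> \<Delta> c)"
  shows "sequent_at (upd_at t p (NNode \<Gamma>' \<Delta>' (c @ [NNode {#A#} {#B#} []]))) =
    (sequent_at t)(p := Some (\<Gamma>', \<Delta>'), p @ [length c] := Some ({#A#}, {#B#}))"
proof
  fix q
  show "sequent_at (upd_at t p (NNode \<Gamma>' \<Delta>' (c @ [NNode {#A#} {#B#} []]))) q =
    ((sequent_at t)(p := Some (\<Gamma>', \<Delta>'), p @ [length c] := Some ({#A#}, {#B#}))) q"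
  proof (cases "prefix p q")
    case True
    then obtain r where q: "q = p @ r" by (auto elim: prefixE)
    then show ?thesis using assms
      by (cases r) (auto simp: sequent_at_def node_at_append node_at_upd_at_append node_at_upd_at node_at_leaf nth_append)
  next
    case False
    then show ?thesis by (auto simp: sequent_at_upd_at_outside)
  qed
qed

definition formulas_at :: "(lbl \<Rightarrow> nat list) \<Rightarrow> (lbl \<times> 'a fm) multiset \<Rightarrow> nat list \<Rightarrow> 'a fm multiset" where
  "formulas_at f M p = image_mset snd {#x \<in># M. f (fst x) = p#}"

lemma formulas_at_empty [simp]: "formulas_at f {#} p = {#}"
  by (simp add: formulas_at_def)

lemma formulas_at_add_mset [simp]:
  "formulas_at f (add_mset (x, A) M) p =
    (if f x = p then add_mset A (formulas_at f M p) else formulas_at f M p)"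
  by (simp add: formulas_at_def)

lemma formulas_at_cong: "(\<And>x. x \<in> fst ` set_mset M \<Longrightarrow> f x = g x) \<Longrightarrow> formulas_at f M p = formulas_at g M p"
  unfolding formulas_at_def by (induction M) auto

(* S stands for the node contents sequent_at t of a nested sequent t. Labels occurring only in
   relational atoms need not be placed at an existing node, whence the disjunct f a = f b. *)
definition embeds ::
  "(lbl \<Rightarrow> nat list) \<Rightarrow> (lbl \<times> lbl) multiset \<Rightarrow> (lbl \<times> 'a fm) multiset \<Rightarrow> (lbl \<times> 'a fm) multiset
    \<Rightarrow> (nat list \<Rightarrow> ('a fm multiset \<times> 'a fm multiset) option) \<Rightarrow> bool" where
  "embeds f R G D S \<longleftrightarrow>
    (\<forall>(a, b) \<in> set_mset R. prefix (f a) (f b) \<and> (f a = f b \<or> S (f b) \<noteq> None)) \<and>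
    (\<forall>p. S p = None \<longrightarrow> formulas_at f G p = {#} \<and> formulas_at f D p = {#}) \<and>
    (\<forall>p \<Gamma> \<Delta>. S p = Some (\<Gamma>, \<Delta>) \<longrightarrow> formulas_at f G p \<subseteq># \<Gamma> \<and> formulas_at f D p \<subseteq># \<Delta>)"

lemma embedsI:
  assumes "\<And>a b. (a, b) \<in># R \<Longrightarrow> prefix (f a) (f b) \<and> (f a = f b \<or> S (f b) \<noteq> None)"
    and "\<And>p. S p = None \<Longrightarrow> formulas_at f G p = {#} \<and> formulas_at f D p = {#}"
    and "\<And>p \<Gamma> \<Delta>. S p = Some (\<Gamma>, \<Delta>) \<Longrightarrow> formulas_at f G p \<subseteq># \<Gamma> \<and> formulas_at f D p \<subseteq># \<Delta>"
  shows "embeds f R G D S"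
  using assms unfolding embeds_def by blast

lemma embeds_relation:
  "embeds f R G D S \<Longrightarrow> (a, b) \<in># R \<Longrightarrow> prefix (f a) (f b) \<and> (f a = f b \<or> S (f b) \<noteq> None)"
  unfolding embeds_def by blast

lemma embeds_None:
  "embeds f R G D S \<Longrightarrow> S p = None \<Longrightarrow> formulas_at f G p = {#} \<and> formulas_at f D p = {#}"
  unfolding embeds_def by blast

lemma embeds_Some:
  assumes "embeds f R G D S" "S p = Some (\<Gamma>, \<Delta>)"
  shows "formulas_at f G p \<subseteq># \<Gamma> \<and> formulas_at f D p \<subseteq># \<Delta>"
  using assms unfolding embeds_def by blast

lemma embeds_add_relation:
  "embeds f R G D S \<Longrightarrow> prefix (f a) (f b) \<Longrightarrow> f a = f b \<or> S (f b) \<noteq> None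
    \<Longrightarrow> embeds f (add_mset (a, b) R) G D S"
  unfolding embeds_def by auto

lemma embeds_ante:
  assumes "embeds f R G D S" "(x, A) \<in># G"
  shows "\<exists>\<Gamma> \<Delta>. S (f x) = Some (\<Gamma>, \<Delta>) \<and> A \<in># \<Gamma>"
proof -
  have "A \<in># formulas_at f G (f x)"
    using assms(2) by (force simp: formulas_at_def)
  then have "S (f x) \<noteq> None"
    using embeds_None[OF assms(1)] by force
  then obtain \<Gamma> \<Delta> where "S (f x) = Some (\<Gamma>, \<Delta>)" by auto
  then show ?thesis
    using embeds_Some[OF assms(1)] \<open>A \<in># formulas_at f G (f x)\<close> by (blast dest: mset_subset_eqD)
qed

lemma embeds_succ:
  assumes "embeds f R G D S" "(x, A) \<in># D"
  shows "\<exists>\<Gamma> \<Delta>. S (f x) = Some (\<Gamma>, \<Delta>) \<and> A \<in># \<Delta>"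
proof -
  have "A \<in># formulas_at f D (f x)"
    using assms(2) by (force simp: formulas_at_def)
  then have "S (f x) \<noteq> None"
    using embeds_None[OF assms(1)] by force
  then obtain \<Gamma> \<Delta> where "S (f x) = Some (\<Gamma>, \<Delta>)" by auto
  then show ?thesis
    using embeds_Some[OF assms(1)] \<open>A \<in># formulas_at f D (f x)\<close> by (blast dest: mset_subset_eqD)
qed

lemma embeds_update:
  assumes "embeds f R G D S" "S p \<noteq> None"
    and "formulas_at f G' p \<subseteq># \<Gamma>'" "formulas_at f D' p \<subseteq># \<Delta>'"
    and "\<And>q. q \<noteq> p \<Longrightarrow> formulas_at f G' q = formulas_at f G q \<and> formulas_at f D' q = formulas_at f D q"
  shows "embeds f R G' D' (S(p := Some (\<Gamma>', \<Delta>')))"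
proof (rule embedsI)
  show "prefix (f a) (f b) \<and> (f a = f b \<or> (S(p := Some (\<Gamma>', \<Delta>'))) (f b) \<noteq> None)"
    if "(a, b) \<in># R" for a b
    using embeds_relation[OF assms(1) that] assms(2) by auto
qed (use assms embeds_None[OF assms(1)] embeds_Some[OF assms(1)] in \<open>auto split: if_splits\<close>)

lemma embeds_add_ante:
  assumes "embeds f R G D S" "S (f x) = Some (\<Gamma>, \<Delta>)"
  shows "embeds f R (add_mset (x, A) G) D (S(f x := Some (add_mset A \<Gamma>, \<Delta>)))"
  using embeds_Some[OF assms] assms(2) by (intro embeds_update[OF assms(1)]) auto

lemma embeds_add_succ:
  assumes "embeds f R G D S" "S (f x) = Some (\<Gamma>, \<Delta>)"
  shows "embeds f R G (add_mset (x, A) D) (S(f x := Some (\<Gamma>, add_mset A \<Delta>)))"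
  using embeds_Some[OF assms] assms(2) by (intro embeds_update[OF assms(1)]) auto

lemma embeds_remove_ante:
  assumes "embeds f R (add_mset (x, C) G) D S"
  obtains \<Gamma> \<Delta> where "S (f x) = Some (add_mset C \<Gamma>, \<Delta>)" "embeds f R G D (S(f x := Some (\<Gamma>, \<Delta>)))"
proof -
  obtain \<Gamma>' \<Delta> where at: "S (f x) = Some (\<Gamma>', \<Delta>)" and "C \<in># \<Gamma>'"
    using embeds_ante[OF assms, of x C] by auto
  then have "S (f x) = Some (add_mset C (\<Gamma>' - {#C#}), \<Delta>)" by simp
  moreover have "embeds f R G D (S(f x := Some (\<Gamma>' - {#C#}, \<Delta>)))"
    using embeds_Some[OF assms at] at
    by (intro embeds_update[OF assms]) (auto simp: insert_subset_eq_iff)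
  ultimately show thesis by (rule that)
qed

lemma embeds_remove_succ:
  assumes "embeds f R G (add_mset (x, C) D) S"
  obtains \<Gamma> \<Delta> where "S (f x) = Some (\<Gamma>, add_mset C \<Delta>)" "embeds f R G D (S(f x := Some (\<Gamma>, \<Delta>)))"
proof -
  obtain \<Gamma> \<Delta>' where at: "S (f x) = Some (\<Gamma>, \<Delta>')" and "C \<in># \<Delta>'"
    using embeds_succ[OF assms, of x C] by auto
  then have "S (f x) = Some (\<Gamma>, add_mset C (\<Delta>' - {#C#}))" by simp
  moreover have "embeds f R G D (S(f x := Some (\<Gamma>, \<Delta>' - {#C#})))"
    using embeds_Some[OF assms at] at
    by (intro embeds_update[OF assms]) (auto simp: insert_subset_eq_iff)
  ultimately show thesis by (rule that)
qed

lemma embeds_fresh_child: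
  assumes emb: "embeds f R G D S" and fresh: "u \<notin> labels R G D"
    and "S (f w) \<noteq> None" "S p = None" "prefix (f w) p"
  shows "embeds (f(u := p)) (add_mset (w, u) R) (add_mset (u, A) G) (add_mset (u, B) D)
    (S(p := Some ({#A#}, {#B#})))"
proof (rule embedsI)
  let ?f = "f(u := p)" and ?S = "S(p := Some ({#A#}, {#B#}))"
  show "prefix (?f a) (?f b) \<and> (?f a = ?f b \<or> ?S (?f b) \<noteq> None)"
    if "(a, b) \<in># add_mset (w, u) R" for a b
  proof (cases "(a, b) = (w, u)")
    case True
    then show ?thesis using assms(5) by auto
  next
    case False
    then have ab: "(a, b) \<in># R" using that by auto
    then have "a \<noteq> u" "b \<noteq> u" using fresh by (force simp: labels_def)+
    then show ?thesis using embeds_relation[OF emb ab] by auto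
  qed
  have "formulas_at ?f G = formulas_at f G" "formulas_at ?f D = formulas_at f D"
    using fresh by (auto intro!: ext formulas_at_cong simp: labels_def image_iff)
  moreover have "formulas_at f G p = {#}" "formulas_at f D p = {#}"
    using embeds_None[OF emb assms(4)] by simp_all
  ultimately show
    "?S q = None \<Longrightarrow> formulas_at ?f (add_mset (u, A) G) q = {#} \<and> formulas_at ?f (add_mset (u, B) D) q = {#}"
    "?S q = Some (\<Gamma>, \<Delta>) \<Longrightarrow> formulas_at ?f (add_mset (u, A) G) q \<subseteq># \<Gamma> \<and> formulas_at ?f (add_mset (u, B) D) q \<subseteq># \<Delta>"
    for q \<Gamma> \<Delta>
    using embeds_None[OF emb, of q] embeds_Some[OF emb, of q] by (auto split: if_splits)
qed

lemma lprov_embeds_nprov: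
  "lprov R G D \<Longrightarrow> embeds f R G D (sequent_at t) \<Longrightarrow> nprov t"
proof (induction R G D arbitrary: t f rule: lprov.induct)
  case (l_id R w u G p D)
  note emb = l_id.prems[simplified]
  obtain q where q: "f u = f w @ q"
    using embeds_relation[OF emb, of w u] by (auto elim: prefixE)
  obtain \<Gamma>\<^sub>1 \<Delta>\<^sub>1 \<Gamma>\<^sub>2 \<Delta>\<^sub>2 where "sequent_at t (f w) = Some (\<Gamma>\<^sub>1, \<Delta>\<^sub>1)" "At p \<in># \<Gamma>\<^sub>1"
    and "sequent_at t (f u) = Some (\<Gamma>\<^sub>2, \<Delta>\<^sub>2)" "At p \<in># \<Delta>\<^sub>2"
    using embeds_ante[OF emb, of w "At p"] embeds_succ[OF emb, of u "At p"] by auto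
  then show ?case
    using q by (auto simp: sequent_at_eq_Some_iff intro: n_id)
next
  case (l_bot R w u G D)
  obtain \<Gamma> \<Delta> where "sequent_at t (f w) = Some (\<Gamma>, \<Delta>)" "Bot \<in># \<Gamma>"
    using embeds_ante[OF l_bot.prems, of w Bot] by auto
  then show ?case by (auto simp: sequent_at_eq_Some_iff intro: n_bot)
next
  case (l_or_l R G w A D B)
  obtain \<Gamma> \<Delta> where "sequent_at t (f w) = Some (add_mset (Or A B) \<Gamma>, \<Delta>)"
    and emb: "embeds f R G D ((sequent_at t)(f w := Some (\<Gamma>, \<Delta>)))"
    using l_or_l.prems by (auto elim: embeds_remove_ante)
  then obtain c where node: "node_at t (f w) = Some (NNode (\<Gamma> + {#Or A B#}) \<Delta> c)"
    by (auto simp: sequent_at_eq_Some_iff)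
  have "embeds f R (G + {#(w, X)#}) D (sequent_at (upd_at t (f w) (NNode (\<Gamma> + {#X#}) \<Delta> c)))" for X
    using embeds_add_ante[OF emb, of w \<Gamma> \<Delta> X] by (simp add: sequent_at_upd_at[OF node])
  then show ?case
    by (intro n_or_l[OF node] l_or_l.IH)
next
  case (l_or_r R G D w A B)
  obtain \<Gamma> \<Delta> where "sequent_at t (f w) = Some (\<Gamma>, add_mset (Or A B) \<Delta>)"
    and emb: "embeds f R G D ((sequent_at t)(f w := Some (\<Gamma>, \<Delta>)))"
    using l_or_r.prems by (auto elim: embeds_remove_succ)
  then obtain c where node: "node_at t (f w) = Some (NNode \<Gamma> (\<Delta> + {#Or A B#}) c)"
    by (auto simp: sequent_at_eq_Some_iff)
  have "embeds f R G (D + {#(w, A), (w, B)#}) (sequent_at (upd_at t (f w) (NNode \<Gamma> (\<Delta> + {#A, B#}) c)))"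
    using embeds_add_succ[OF embeds_add_succ[OF emb, of w \<Gamma> \<Delta> B], of w \<Gamma> "add_mset B \<Delta>" A]
    by (simp add: sequent_at_upd_at[OF node])
  then show ?case
    by (intro n_or_r[OF node] l_or_r.IH)
next
  case (l_and_l R G w A B D)
  obtain \<Gamma> \<Delta> where "sequent_at t (f w) = Some (add_mset (And A B) \<Gamma>, \<Delta>)"
    and emb: "embeds f R G D ((sequent_at t)(f w := Some (\<Gamma>, \<Delta>)))"
    using l_and_l.prems by (auto elim: embeds_remove_ante)
  then obtain c where node: "node_at t (f w) = Some (NNode (\<Gamma> + {#And A B#}) \<Delta> c)"
    by (auto simp: sequent_at_eq_Some_iff)
  have "embeds f R (G + {#(w, A), (w, B)#}) D (sequent_at (upd_at t (f w) (NNode (\<Gamma> + {#A, B#}) \<Delta> c)))"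
    using embeds_add_ante[OF embeds_add_ante[OF emb, of w \<Gamma> \<Delta> B], of w "add_mset B \<Gamma>" \<Delta> A]
    by (simp add: sequent_at_upd_at[OF node])
  then show ?case
    by (intro n_and_l[OF node] l_and_l.IH)
next
  case (l_and_r R G D w A B)
  obtain \<Gamma> \<Delta> where "sequent_at t (f w) = Some (\<Gamma>, add_mset (And A B) \<Delta>)"
    and emb: "embeds f R G D ((sequent_at t)(f w := Some (\<Gamma>, \<Delta>)))"
    using l_and_r.prems by (auto elim: embeds_remove_succ)
  then obtain c where node: "node_at t (f w) = Some (NNode \<Gamma> (\<Delta> + {#And A B#}) c)"
    by (auto simp: sequent_at_eq_Some_iff)
  have "embeds f R G (D + {#(w, X)#}) (sequent_at (upd_at t (f w) (NNode \<Gamma> (\<Delta> + {#X#}) c)))" for X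
    using embeds_add_succ[OF emb, of w \<Gamma> \<Delta> X] by (simp add: sequent_at_upd_at[OF node])
  then show ?case
    by (intro n_and_r[OF node] l_and_r.IH)
next
  case (l_imp_l R w u G A B D)
  note emb = l_imp_l.prems[simplified]
  obtain q where q: "f u = f w @ q" and wu: "f w = f u \<or> sequent_at t (f u) \<noteq> None"
    using embeds_relation[OF emb, of w u] by (auto elim: prefixE)
  obtain \<Gamma>\<^sub>1 \<Delta>\<^sub>1 where at\<^sub>1: "sequent_at t (f w) = Some (\<Gamma>\<^sub>1, \<Delta>\<^sub>1)" and imp: "Imp A B \<in># \<Gamma>\<^sub>1"
    using embeds_ante[OF emb, of w "Imp A B"] by auto
  then obtain \<Gamma>\<^sub>2 \<Delta>\<^sub>2 where at\<^sub>2: "sequent_at t (f u) = Some (\<Gamma>\<^sub>2, \<Delta>\<^sub>2)"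
    using wu by fastforce
  obtain c\<^sub>1 c\<^sub>2 where node\<^sub>1: "node_at t (f w) = Some (NNode \<Gamma>\<^sub>1 \<Delta>\<^sub>1 c\<^sub>1)"
    and node\<^sub>2: "node_at t (f w @ q) = Some (NNode \<Gamma>\<^sub>2 \<Delta>\<^sub>2 c\<^sub>2)"
    using at\<^sub>1 at\<^sub>2 q by (auto simp: sequent_at_eq_Some_iff)
  have "embeds f (R + {#(w, u)#}) (G + {#(w, Imp A B), (u, B)#}) D
      (sequent_at (upd_at t (f w @ q) (NNode (\<Gamma>\<^sub>2 + {#B#}) \<Delta>\<^sub>2 c\<^sub>2)))"
    using embeds_add_ante[OF emb at\<^sub>2, of B] q by (simp add: sequent_at_upd_at[OF node\<^sub>2] add_mset_commute)
  moreover have "embeds f (R + {#(w, u)#}) (G + {#(w, Imp A B)#}) (D + {#(u, A)#})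
      (sequent_at (upd_at t (f w @ q) (NNode \<Gamma>\<^sub>2 (\<Delta>\<^sub>2 + {#A#}) c\<^sub>2)))"
    using embeds_add_succ[OF emb at\<^sub>2, of A] q by (simp add: sequent_at_upd_at[OF node\<^sub>2])
  ultimately show ?case
    by (intro n_imp_l[OF node\<^sub>1 imp node\<^sub>2] l_imp_l.IH)
next
  case (l_imp_r u R G D w A B)
  obtain \<Gamma> \<Delta> where "sequent_at t (f w) = Some (\<Gamma>, add_mset (Imp A B) \<Delta>)"
    and emb: "embeds f R G D ((sequent_at t)(f w := Some (\<Gamma>, \<Delta>)))"
    using l_imp_r.prems by (auto elim: embeds_remove_succ)
  then obtain c where node: "node_at t (f w) = Some (NNode \<Gamma> (\<Delta> + {#Imp A B#}) c)"
    by (auto simp: sequent_at_eq_Some_iff)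
  have fresh: "u \<notin> labels R G D"
    using l_imp_r.hyps(1) by (simp add: labels_def)
  have "sequent_at t (f w @ [length c]) = None"
    using node_at_append[OF node, of "[length c]"] by (simp add: sequent_at_def)
  then have "embeds (f(u := f w @ [length c])) (R + {#(w, u)#}) (G + {#(u, A)#}) (D + {#(u, B)#})
      (sequent_at (upd_at t (f w) (NNode \<Gamma> \<Delta> (c @ [NNode {#A#} {#B#} []]))))"
    using embeds_fresh_child[OF emb fresh, where p = "f w @ [length c]" and A = A and B = B]
    by (simp add: sequent_at_upd_at_new_child[OF node])
  then show ?case
    by (intro n_imp_r[OF node] l_imp_r.IH)
next
  case (l_ref R w G D)
  then show ?case by (auto intro: embeds_add_relation)
next
  case (l_tra R w u v G D)
  note emb = l_tra.prems[simplified]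
  have "prefix (f w) (f u) \<and> (f w = f u \<or> sequent_at t (f u) \<noteq> None)"
    and "prefix (f u) (f v) \<and> (f u = f v \<or> sequent_at t (f v) \<noteq> None)"
    using embeds_relation[OF emb, of w u] embeds_relation[OF emb, of u v] by auto
  then have "prefix (f w) (f v) \<and> (f w = f v \<or> sequent_at t (f v) \<noteq> None)"
    by (metis prefix_order.trans)
  then show ?case
    using embeds_add_relation[OF emb, of w v] by (intro l_tra.IH) (simp add: add_mset_commute)
qed

theorem mainTheorem9:
  fixes A :: "'a fm" and w :: lbl
  assumes "lprov {#} {#} {#(w, A)#}"
  shows "nprov (NNode {#} {#A#} [])"
proof (rule lprov_embeds_nprov[OF assms])
  have "sequent_at (NNode {#} {#A#} []) p = (if p = [] then Some ({#}, {#A#}) else None)" for p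
    by (simp add: sequent_at_def node_at_leaf)
  then show "embeds (\<lambda>_. []) {#} {#} {#(w, A)#} (sequent_at (NNode {#} {#A#} []))"
    by (simp add: embeds_def)
qed

end
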